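(* Let $r_0,\overline{r_0},l_0\in\mathbb N$, let $G_0\in\mathcal C_{V_0,2l_0}$ and $\overline{G_0}\in\mathcal C_{\overline V_0,2l_0}$ be circuit multigraphs without balanced leaves on finite vertex sets $V_0,\overline V_0\subset\mathbb N$ with $\#V_0=r_0$, $\#\overline V_0=\overline{r_0}$, and let $V'\subset\mathbb N$ be a finite set with $l':=\#V'$, disjoint from $V_0$ and $\overline V_0$. Assume that if $l_0=1$ and $G_0$ has a route $(v_i,v_j)$ with $v_i\ne v_j$, then $v_i,v_j$ are larger than all elements of $V'$, and likewise for $\overline{G_0}$. Then for every $B\subset V'$, $$\#\{G\in\mathcal C_{V_0\sqcup V',2l_0+2l'}\mid \operatorname S(G)=G_0,\ B(G)\cap V'=B\}=\#\{G\in\mathcal C_{\overline V_0\sqcup V',2l_0+2l'}\mid \operatorname S(G)=\overline{G_0},\ B(G)\cap V'=B\}.$$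
   Context: Vertices are positive integers with their natural order. For a finite $V\subset\mathbb N$ and $N\ge1$, a route through $V$ of length $N$ is a sequence $\mathbf i=(i_1,\dots,i_N)\in V^N$ whose set of entries equals $V$; its circuit multigraph $G_{\mathbf i}$ has vertex set $V$ and edges $1,\dots,N$ (own identity), edge $k<N$ from $i_k$ to $i_{k+1}$, edge $N$ from $i_N$ to $i_1$; $\mathcal C_{V,N}$ is the set of these, identified with their routes. Black vertices: $B(G_{\mathbf i})=\{i_t:t\text{ odd}\}$. Balanced leaf (only when $N>2$): a vertex $v$ occurring exactly once in $\mathbf i$, say $i_t=v$, with equal cyclic neighbours $i_{t-1}=i_{t+1}$ (indices mod $N$). Removing $v=i_t$: delete positions $t,t+1$ if $t<N$, positions $N-1,N$ if $t=N$. Seed graph: $\operatorname S(G)=G$ if $G$ has no balanced leaf, otherwise $\operatorname S(G)=\operatorname S(\widetilde G)$ with $\widetilde G$ being $G$ with its smallest balanced leaf removed. *)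

theory Defs
  imports Main
begin

text \<open>Routes are lists (0-based positions). Position k (0-based) corresponds to
  position k+1 of the paper.\<close>

definition circuits :: "nat set \<Rightarrow> nat \<Rightarrow> nat list set" where
  "circuits V N = {xs. length xs = N \<and> set xs = V}"

definition black :: "nat list \<Rightarrow> nat set" where
  "black xs = {xs ! k | k. k < length xs \<and> even k}"

definition is_balanced_leaf :: "nat list \<Rightarrow> nat \<Rightarrow> bool" where
  "is_balanced_leaf xs v \<longleftrightarrow> length xs > 2 \<and> count_list xs v = 1 \<and>
     (\<exists>k < length xs. xs ! k = v \<and>
        xs ! ((k + length xs - 1) mod length xs) = xs ! ((k + 1) mod length xs))"

definition balanced_leaves :: "nat list \<Rightarrow> nat set" where
  "balanced_leaves xs = {v. is_balanced_leaf xs v}"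

definition remove_leaf :: "nat list \<Rightarrow> nat \<Rightarrow> nat list" where
  "remove_leaf xs v = (let k = (LEAST k. k < length xs \<and> xs ! k = v) in
     if k < length xs - 1 then take k xs @ drop (k + 2) xs
     else take (length xs - 2) xs)"

lemma balanced_leaves_finite: "finite (balanced_leaves xs)"
proof -
  have "balanced_leaves xs \<subseteq> set xs"
    unfolding balanced_leaves_def is_balanced_leaf_def by (auto simp: count_list_0_iff[symmetric])
  thus ?thesis by (rule finite_subset) simp
qed

lemma remove_leaf_length:
  assumes "length xs > 2" shows "length (remove_leaf xs v) < length xs"
  using assms unfolding remove_leaf_def Let_def by auto

function seed :: "nat list \<Rightarrow> nat list" where
  "seed xs = (if balanced_leaves xs = {} then xs
              else seed (remove_leaf xs (Min (balanced_leaves xs))))"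
  by auto
termination
proof (relation "measure length")
  fix xs assume "balanced_leaves xs \<noteq> {}"
  then have "length xs > 2" unfolding balanced_leaves_def is_balanced_leaf_def by auto
  thus "(remove_leaf xs (Min (balanced_leaves xs)), xs) \<in> measure length"
    using remove_leaf_length by simp
qed simp

end

theory Submission
  imports Defs
begin

text \<open>Every balanced leaf removed while reducing a graph \<open>G\<close> with seed \<open>G\<^sub>0\<close> lies in \<open>V'\<close>,
  because the vertices of the seed survive the reduction. Replaying the removals backwards on
  \<open>G\<^sub>0'\<close> instead of \<open>G\<^sub>0\<close> (the map \<open>reseed\<close>) produces a route that carries the vertices of
  \<open>V'\<close> at the same positions, hence has the same black vertices in \<open>V'\<close>. At every stage the
  two routes have the same balanced leaves in \<open>V'\<close>, and all other balanced leaves of the new route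
  are larger than every vertex of \<open>V'\<close>: inserting a leaf into a route of length at least 3 creates
  no new balanced leaf besides itself, and in a route \<open>[a, b]\<close> the only vertices that can become
  balanced leaves are \<open>a\<close> and \<open>b\<close>, which exceed \<open>V'\<close> by hypothesis. So the smallest balanced
  leaf is the same on both sides, the replayed route reduces to \<open>G\<^sub>0'\<close>, and reseeding with
  \<open>G\<^sub>0\<close> inverts the map.\<close>

lemma count_list_eq_1_nth_unique:
  assumes "count_list xs w = 1" "i < length xs" "j < length xs" "xs ! i = w" "xs ! j = w"
  shows "i = j"
  using assms
proof (induction xs arbitrary: i j)
  case (Cons a xs)
  show ?case
  proof (cases i)
    case 0
    then show ?thesis using Cons.prems by (cases j) (auto simp: count_list_0_iff)
  next
    case (Suc i')
    then show ?thesis using Cons by (cases j) (auto simp: count_list_0_iff split: if_splits)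
  qed
qed simp

definition first_pos :: "nat list \<Rightarrow> nat \<Rightarrow> nat" where
  "first_pos xs v = (LEAST k. k < length xs \<and> xs ! k = v)"

lemma first_pos_eq:
  assumes "count_list xs w = 1" "k < length xs" "xs ! k = w"
  shows "first_pos xs w = k"
  unfolding first_pos_def
proof (rule Least_equality)
  show "k < length xs \<and> xs ! k = w" using assms by simp
  fix y assume "y < length xs \<and> xs ! y = w"
  then show "k \<le> y" using count_list_eq_1_nth_unique[OF assms(1,2), of y] assms(3) by simp
qed

lemma remove_leaf_first_pos:
  "remove_leaf xs v = (if first_pos xs v < length xs - 1
     then take (first_pos xs v) xs @ drop (first_pos xs v + 2) xs
     else take (length xs - 2) xs)"
  unfolding remove_leaf_def first_pos_def Let_def by simp

definition cyc_prev :: "nat \<Rightarrow> nat \<Rightarrow> nat" where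
  "cyc_prev n j = (if j = 0 then n - 1 else j - 1)"

definition cyc_next :: "nat \<Rightarrow> nat \<Rightarrow> nat" where
  "cyc_next n j = (if j + 1 = n then 0 else j + 1)"

lemma cyc_prev_eq_mod:
  assumes "j < n" shows "cyc_prev n j = (j + n - 1) mod n"
proof (cases j)
  case (Suc i)
  then have "j + n - 1 = i + n" by simp
  then show ?thesis using Suc assms by (simp add: cyc_prev_def)
qed (use assms in \<open>simp add: cyc_prev_def\<close>)

lemma cyc_next_eq_mod:
  assumes "j < n" shows "cyc_next n j = (j + 1) mod n"
  using assms by (cases "j + 1 = n") (auto simp: cyc_next_def)

lemma is_balanced_leaf_at:
  assumes "count_list xs w = 1" "j < length xs" "xs ! j = w"
  shows "is_balanced_leaf xs w \<longleftrightarrow>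
    length xs > 2 \<and> xs ! cyc_prev (length xs) j = xs ! cyc_next (length xs) j"
  using assms count_list_eq_1_nth_unique[OF assms(1)]
  unfolding is_balanced_leaf_def cyc_prev_eq_mod[OF assms(2)] cyc_next_eq_mod[OF assms(2)]
  by metis

lemma is_balanced_leaf_first_pos:
  assumes "is_balanced_leaf xs w"
  shows "first_pos xs w < length xs" "xs ! first_pos xs w = w" "count_list xs w = 1" "length xs > 2"
    "xs ! cyc_prev (length xs) (first_pos xs w) = xs ! cyc_next (length xs) (first_pos xs w)"
proof -
  have l: "length xs > 2" and c: "count_list xs w = 1"
    using assms unfolding is_balanced_leaf_def by simp_all
  then obtain k where k: "k < length xs" "xs ! k = w"
    by (metis count_list_0_iff in_set_conv_nth zero_neq_one)
  have p: "first_pos xs w = k" using first_pos_eq[OF c k] .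
  show "first_pos xs w < length xs" "xs ! first_pos xs w = w" "count_list xs w = 1" "length xs > 2"
    using k c l by (simp_all add: p)
  show "xs ! cyc_prev (length xs) (first_pos xs w) = xs ! cyc_next (length xs) (first_pos xs w)"
    unfolding p using is_balanced_leaf_at[OF c k] assms by blast
qed

definition anchor :: "nat list \<Rightarrow> nat \<Rightarrow> nat" where
  "anchor H k = H ! (if k \<le> length H then cyc_prev (length H) k else 0)"

text \<open>Inverse of \<^const>\<open>remove_leaf\<close> for a leaf at position \<open>k\<close>; the position
  \<open>k = length H + 1\<close> undoes the removal of a leaf in the last position.\<close>

definition insert_leaf :: "nat list \<Rightarrow> nat \<Rightarrow> nat \<Rightarrow> nat list" where
  "insert_leaf H k v =
     (if k \<le> length H then take k H @ [v, anchor H k] @ drop k H else H @ [anchor H k, v])"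

lemma anchor_in_set: "H \<noteq> [] \<Longrightarrow> anchor H k \<in> set H"
  unfolding anchor_def cyc_prev_def by auto

lemma length_insert_leaf [simp]: "length (insert_leaf H k v) = length H + 2"
  unfolding insert_leaf_def by auto

lemma set_insert_leaf:
  assumes "H \<noteq> []" shows "set (insert_leaf H k v) = insert v (set H)"
proof -
  have "set (take k H) \<union> set (drop k H) = set H" by (metis append_take_drop_id set_append)
  then show ?thesis using anchor_in_set[OF assms] unfolding insert_leaf_def by auto
qed

lemma count_list_insert_leaf:
  "count_list (insert_leaf H k v) w
     = count_list H w + (if w = v then 1 else 0) + (if w = anchor H k then 1 else 0)"
proof (cases "k \<le> length H")
  case True
  have "count_list H w = count_list (take k H) w + count_list (drop k H) w"
    by (metis append_take_drop_id count_list_append)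
  then show ?thesis using True unfolding insert_leaf_def by auto
qed (simp add: insert_leaf_def)

lemma nth_insert_leaf:
  assumes "i < length H + 2"
  shows "insert_leaf H k v ! i =
    (if k \<le> length H then
       if i < k then H ! i else if i = k then v else if i = k + 1 then anchor H k else H ! (i - 2)
     else if i < length H then H ! i else if i = length H then anchor H k else v)"
proof (cases "k \<le> length H")
  case True
  then show ?thesis
    using assms unfolding insert_leaf_def by (auto simp: nth_append min_def nth_Cons')
next
  case False
  then show ?thesis using assms unfolding insert_leaf_def by (auto simp: nth_append nth_Cons')
qed

text \<open>Inserting the leaf turns the anchor \<open>u\<close> into \<open>u v u\<close>, so every other vertex keeps its
  cyclic neighbours.\<close>

lemma insert_leaf_keeps_neighbours:
  assumes "k \<le> length H + 1" "j < length H" "H ! j \<noteq> anchor H k"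
  defines "j' \<equiv> if k \<le> length H \<and> k \<le> j then j + 2 else j"
  shows "insert_leaf H k v ! j' = H ! j"
    "insert_leaf H k v ! cyc_prev (length H + 2) j' = H ! cyc_prev (length H) j"
    "insert_leaf H k v ! cyc_next (length H + 2) j' = H ! cyc_next (length H) j"
proof -
  let ?n = "length H"
  show "insert_leaf H k v ! j' = H ! j"
    using assms by (auto simp: nth_insert_leaf)
  have "insert_leaf H k v ! cyc_prev (?n + 2) j' = H ! cyc_prev ?n j
      \<and> insert_leaf H k v ! cyc_next (?n + 2) j' = H ! cyc_next ?n j"
  proof (cases "k \<le> ?n")
    case True
    then have "j \<noteq> cyc_prev ?n k" using assms(3) unfolding anchor_def by auto
    then show ?thesis using True assms(2) unfolding j'_def
      by (auto simp: nth_insert_leaf anchor_def cyc_prev_def cyc_next_def)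
        (rule arg_cong[where f = "(!) H"], linarith)
  next
    case False
    then have "j \<noteq> 0" using assms(3) unfolding anchor_def by (metis not_gr0)
    then show ?thesis using False assms(2) unfolding j'_def
      by (auto simp: nth_insert_leaf anchor_def cyc_prev_def cyc_next_def)
  qed
  then show "insert_leaf H k v ! cyc_prev (?n + 2) j' = H ! cyc_prev ?n j"
    "insert_leaf H k v ! cyc_next (?n + 2) j' = H ! cyc_next ?n j" by simp_all
qed

lemma count_list_insert_leaf_new:
  "v \<notin> set H \<Longrightarrow> H \<noteq> [] \<Longrightarrow> count_list (insert_leaf H k v) v = 1"
  using count_list_insert_leaf[of H k v v] anchor_in_set[of H k] by auto

lemma nth_insert_leaf_new: "k \<le> length H + 1 \<Longrightarrow> insert_leaf H k v ! k = v"
  by (simp add: nth_insert_leaf)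

lemma first_pos_insert_leaf:
  "v \<notin> set H \<Longrightarrow> H \<noteq> [] \<Longrightarrow> k \<le> length H + 1 \<Longrightarrow> first_pos (insert_leaf H k v) v = k"
  by (simp add: first_pos_eq count_list_insert_leaf_new nth_insert_leaf_new)

lemma remove_leaf_insert_leaf:
  assumes "v \<notin> set H" "H \<noteq> []" "k \<le> length H + 1"
  shows "remove_leaf (insert_leaf H k v) v = H"
  unfolding remove_leaf_first_pos first_pos_insert_leaf[OF assms]
  by (simp add: insert_leaf_def)

lemma is_balanced_leaf_insert_leaf_new:
  assumes "v \<notin> set H" "H \<noteq> []" "k \<le> length H + 1"
  shows "is_balanced_leaf (insert_leaf H k v) v"
proof -
  have "insert_leaf H k v ! cyc_prev (length H + 2) k
      = insert_leaf H k v ! cyc_next (length H + 2) k"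
    using assms(2,3) by (auto simp: nth_insert_leaf anchor_def cyc_prev_def cyc_next_def)
  then show ?thesis
    using is_balanced_leaf_at[OF count_list_insert_leaf_new[OF assms(1,2)], of k] assms
    by (simp add: nth_insert_leaf_new)
qed

lemma is_balanced_leaf_insert_leafD:
  assumes "is_balanced_leaf (insert_leaf H k v) w" "w \<noteq> v" "H \<noteq> []"
  shows "count_list H w = 1" "w \<noteq> anchor H k"
proof -
  have "count_list (insert_leaf H k v) w = 1" using assms(1) unfolding is_balanced_leaf_def by simp
  moreover have "count_list H (anchor H k) \<noteq> 0"
    using anchor_in_set[OF assms(3)] by (simp add: count_list_0_iff)
  ultimately show "count_list H w = 1" "w \<noteq> anchor H k"
    using assms(2) count_list_insert_leaf[of H k v w] by (auto split: if_splits)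
qed

lemma is_balanced_leaf_insert_leaf_iff:
  assumes "w \<noteq> v" "v \<notin> set H" "length H \<ge> 3" "k \<le> length H + 1"
  shows "is_balanced_leaf (insert_leaf H k v) w \<longleftrightarrow> is_balanced_leaf H w \<and> w \<noteq> anchor H k"
proof (cases "count_list H w = 1 \<and> w \<noteq> anchor H k")
  case False
  have "H \<noteq> []" using assms(3) by auto
  then have "\<not> is_balanced_leaf (insert_leaf H k v) w"
    using is_balanced_leaf_insert_leafD[OF _ assms(1)] False by blast
  then show ?thesis using False unfolding is_balanced_leaf_def by blast
next
  case True
  have "H \<noteq> []" using assms(3) by auto
  from True have c: "count_list (insert_leaf H k v) w = 1"
    using assms(1) count_list_insert_leaf[of H k v w] by simp
  from True obtain j where j: "j < length H" "H ! j = w"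
    by (metis count_list_0_iff in_set_conv_nth zero_neq_one)
  define j' where "j' = (if k \<le> length H \<and> k \<le> j then j + 2 else j)"
  have "H ! j \<noteq> anchor H k" using True j by simp
  note nb = insert_leaf_keeps_neighbours[OF assms(4) j(1) this, of v, folded j'_def]
  have "j' < length (insert_leaf H k v)" using j(1) unfolding j'_def by simp
  have "is_balanced_leaf (insert_leaf H k v) w \<longleftrightarrow>
      insert_leaf H k v ! cyc_prev (length H + 2) j'
      = insert_leaf H k v ! cyc_next (length H + 2) j'"
    using is_balanced_leaf_at[OF c \<open>j' < _\<close>] nb(1) j(2) \<open>H \<noteq> []\<close> by simp
  also have "\<dots> \<longleftrightarrow> H ! cyc_prev (length H) j = H ! cyc_next (length H) j"
    using nb(2,3) by simp
  also have "\<dots> \<longleftrightarrow> is_balanced_leaf H w"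
    using is_balanced_leaf_at[of H w j] True j assms(3) by simp
  finally show ?thesis using True by simp
qed

lemma balanced_leaves_insert_leaf:
  assumes "v \<notin> set H" "length H \<ge> 3" "k \<le> length H + 1"
  shows "balanced_leaves (insert_leaf H k v) = insert v (balanced_leaves H - {anchor H k})"
proof -
  have "\<not> is_balanced_leaf H v"
    using assms(1) unfolding is_balanced_leaf_def by (auto simp: count_list_0_iff[symmetric])
  moreover have "H \<noteq> []" using assms(2) by auto
  then have "is_balanced_leaf (insert_leaf H k v) v"
    using is_balanced_leaf_insert_leaf_new[OF assms(1) _ assms(3)] by blast
  ultimately show ?thesis
    using is_balanced_leaf_insert_leaf_iff[OF _ assms] unfolding balanced_leaves_def
    by (auto; metis)
qed

lemma balanced_leaves_insert_leaf_subset: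
  "H \<noteq> [] \<Longrightarrow> balanced_leaves (insert_leaf H k v) \<subseteq> insert v {w. count_list H w = 1}"
  using is_balanced_leaf_insert_leafD unfolding balanced_leaves_def by blast

lemma list_all2_anchor:
  assumes "list_all2 R G H" "G \<noteq> []"
  shows "R (anchor G k) (anchor H k)"
proof -
  have l: "length G = length H" using assms(1) by (rule list_all2_lengthD)
  have "H \<noteq> []" using assms(2) l by auto
  then have "(if k \<le> length H then cyc_prev (length H) k else 0) < length H"
    by (auto simp: cyc_prev_def)
  then show ?thesis unfolding anchor_def l using list_all2_nthD[OF assms(1)] l by simp
qed

lemma list_all2_insert_leaf:
  assumes "list_all2 R G H" "R v v" "G \<noteq> []"
  shows "list_all2 R (insert_leaf G k v) (insert_leaf H k v)"
  using assms list_all2_anchor[OF assms(1,3)] list_all2_lengthD[OF assms(1)]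
  unfolding insert_leaf_def by (simp add: list_all2_appendI list_all2_takeI list_all2_dropI)

lemma length_remove_leaf:
  assumes "is_balanced_leaf G v" shows "length G = length (remove_leaf G v) + 2"
  using is_balanced_leaf_first_pos(1,4)[OF assms] by (auto simp: remove_leaf_first_pos)

lemma nth_remove_leaf:
  assumes "is_balanced_leaf G v" "i < length G - 2"
  shows "remove_leaf G v ! i =
    G ! (if first_pos G v < length G - 1 \<and> first_pos G v \<le> i then i + 2 else i)"
  using assms is_balanced_leaf_first_pos(1)[OF assms(1)]
  by (auto simp: remove_leaf_first_pos nth_append)

lemma anchor_remove_leaf:
  assumes "is_balanced_leaf G v"
  shows "anchor (remove_leaf G v) (first_pos G v) = G ! cyc_next (length G) (first_pos G v)"
proof -
  define k N H where "k = first_pos G v" and "N = length G" and "H = remove_leaf G v"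
  have k: "k < N" and N: "N > 2" and leaf: "G ! cyc_prev N k = G ! cyc_next N k"
    using is_balanced_leaf_first_pos[OF assms] unfolding k_def N_def by auto
  have lH: "length H = N - 2" using length_remove_leaf[OF assms] unfolding H_def N_def by simp
  have nthH: "H ! i = G ! (if k < N - 1 \<and> k \<le> i then i + 2 else i)" if "i < N - 2" for i
    using nth_remove_leaf[OF assms] that unfolding H_def k_def N_def by simp
  have "anchor H k = G ! cyc_next N k"
  proof (cases "k < N - 1")
    case True
    then have "k \<le> N - 2" by linarith
    then have "anchor H k = H ! cyc_prev (N - 2) k" unfolding anchor_def lH by simp
    also have "\<dots> = G ! cyc_prev N k"
    proof (cases "k = 0")
      case True
      then have "cyc_prev (N - 2) k = N - 3" "cyc_prev N k = (N - 3) + 2"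
        using N by (simp_all add: cyc_prev_def)
      then show ?thesis using nthH[of "N - 3"] N True by simp
    next
      case False
      then show ?thesis using nthH[of "k - 1"] \<open>k \<le> N - 2\<close> by (auto simp: cyc_prev_def)
    qed
    finally show ?thesis using leaf by simp
  next
    case False
    then have "k = N - 1" "\<not> k \<le> N - 2" using k N by linarith+
    then have "anchor H k = H ! 0" unfolding anchor_def lH by simp
    also have "\<dots> = G ! cyc_next N k" using \<open>k = N - 1\<close> N nthH[of 0] by (simp add: cyc_next_def)
    finally show ?thesis .
  qed
  then show ?thesis unfolding H_def k_def N_def .
qed

lemma insert_leaf_remove_leaf:
  assumes "is_balanced_leaf G v"
  shows "insert_leaf (remove_leaf G v) (first_pos G v) v = G"
proof -
  define k N H where "k = first_pos G v" and "N = length G" and "H = remove_leaf G v"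
  have k: "k < N" "G ! k = v" and N: "N > 2" and leaf: "G ! cyc_prev N k = G ! cyc_next N k"
    using is_balanced_leaf_first_pos[OF assms] unfolding k_def N_def by auto
  have lH: "length H = N - 2" using length_remove_leaf[OF assms] unfolding H_def N_def by simp
  have nthH: "H ! i = G ! (if k < N - 1 \<and> k \<le> i then i + 2 else i)" if "i < N - 2" for i
    using nth_remove_leaf[OF assms] that unfolding H_def k_def N_def by simp
  have anc: "anchor H k = G ! cyc_next N k"
    using anchor_remove_leaf[OF assms] unfolding H_def k_def N_def .
  have "insert_leaf H k v ! i = G ! i" if i: "i < N" for i
  proof (cases "k < N - 1")
    case True
    consider "i < k" | "i = k" | "i = k + 1" | "k + 2 \<le> i" by linarith
    then show ?thesis
    proof cases
      case 4
      then have "i - 2 < N - 2" "i - 2 + 2 = i" using i by auto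
      then show ?thesis using 4 True lH nthH[of "i - 2"] by (simp add: nth_insert_leaf)
    qed (use True i k lH nthH[of i] anc in \<open>auto simp: nth_insert_leaf cyc_next_def\<close>)
  next
    case False
    then have kN: "k = N - 1" "\<not> k \<le> length H" using k(1) N lH by linarith+
    consider "i < N - 2" | "i = N - 2" | "i = N - 1" using i by linarith
    then show ?thesis
    proof cases
      case 1
      then show ?thesis using kN nthH[of i] lH by (simp add: nth_insert_leaf)
    next
      case 2
      have "cyc_prev N k = N - 2" "cyc_next N k = 0"
        using kN N by (auto simp: cyc_prev_def cyc_next_def)
      then show ?thesis using 2 kN lH anc leaf by (simp add: nth_insert_leaf)
    next
      case 3
      then show ?thesis using kN lH k(2) by (simp add: nth_insert_leaf)
    qed
  qed
  then show ?thesis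
    using N lH unfolding k_def[symmetric] H_def[symmetric] N_def by (intro nth_equalityI) auto
qed

lemma first_pos_le_length_remove_leaf:
  "is_balanced_leaf G v \<Longrightarrow> first_pos G v \<le> length (remove_leaf G v) + 1"
  using is_balanced_leaf_first_pos(1) length_remove_leaf by fastforce

lemma set_remove_leaf:
  assumes "is_balanced_leaf G v"
  shows "set G = insert v (set (remove_leaf G v))" "v \<notin> set (remove_leaf G v)"
proof -
  let ?H = "remove_leaf G v"
  have G: "G = insert_leaf ?H (first_pos G v) v" using insert_leaf_remove_leaf[OF assms] by simp
  have "?H \<noteq> []" using length_remove_leaf[OF assms] is_balanced_leaf_first_pos(4)[OF assms] by auto
  then show "set G = insert v (set ?H)" by (subst G) (rule set_insert_leaf)
  have "count_list G v = 1" using is_balanced_leaf_first_pos(3)[OF assms] .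
  then have "count_list ?H v = 0" using count_list_insert_leaf[of ?H "first_pos G v" v v] G by simp
  then show "v \<notin> set ?H" by (simp add: count_list_0_iff)
qed

declare seed.simps [simp del]

lemma seed_no_leaves: "balanced_leaves G = {} \<Longrightarrow> seed G = G"
  by (simp add: seed.simps)

lemma seed_remove_Min_leaf:
  "balanced_leaves G \<noteq> {} \<Longrightarrow> seed G = seed (remove_leaf G (Min (balanced_leaves G)))"
  by (simp add: seed.simps)

lemma is_balanced_leaf_Min:
  "balanced_leaves G \<noteq> {} \<Longrightarrow> is_balanced_leaf G (Min (balanced_leaves G))"
  using Min_in[OF balanced_leaves_finite] unfolding balanced_leaves_def by auto

lemma seed_subset: "set (seed G) \<subseteq> set G \<and> length (seed G) \<le> length G"
proof (induction G rule: seed.induct)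
  case (1 G)
  show ?case
  proof (cases "balanced_leaves G = {}")
    case False
    note leaf = is_balanced_leaf_Min[OF False]
    show ?thesis using "1.IH"[OF False] seed_remove_Min_leaf[OF False]
      set_remove_leaf(1)[OF leaf] length_remove_leaf[OF leaf] by auto
  qed (simp add: seed_no_leaves)
qed

lemma no_balanced_leaves_short: "length G \<le> 2 \<Longrightarrow> balanced_leaves G = {}"
  unfolding balanced_leaves_def is_balanced_leaf_def by auto

definition agree_on :: "nat set \<Rightarrow> nat \<Rightarrow> nat \<Rightarrow> bool" where
  "agree_on V x y \<longleftrightarrow> (x \<in> V \<or> y \<in> V \<longrightarrow> x = y)"

lemma black_Int_eq_if_agree_on:
  assumes "list_all2 (agree_on V) G H"
  shows "black G \<inter> V = black H \<inter> V"
proof -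
  have l: "length G = length H" and r: "\<And>i. i < length G \<Longrightarrow> agree_on V (G ! i) (H ! i)"
    using assms by (simp_all add: list_all2_conv_all_nth)
  have "G ! i \<in> V \<longleftrightarrow> H ! i \<in> V" "G ! i \<in> V \<Longrightarrow> G ! i = H ! i" if "i < length G" for i
    using r[OF that] unfolding agree_on_def by auto
  then show ?thesis unfolding black_def l by (auto; metis)
qed

lemma balanced_leaves_insert_leaf_agree_on:
  assumes "list_all2 (agree_on V) G H" "length G \<ge> 3" "k \<le> length G + 1"
    and "v \<notin> set G" "v \<notin> set H"
    and "balanced_leaves H \<inter> V = balanced_leaves G \<inter> V"
  shows "balanced_leaves (insert_leaf H k v) \<inter> V = balanced_leaves (insert_leaf G k v) \<inter> V"
proof -
  have l: "length G = length H" using assms(1) by (rule list_all2_lengthD)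
  have "G \<noteq> []" using assms(2) by auto
  then have "agree_on V (anchor G k) (anchor H k)" by (rule list_all2_anchor[OF assms(1)])
  then have "x \<in> V \<Longrightarrow> x = anchor H k \<longleftrightarrow> x = anchor G k" for x
    unfolding agree_on_def by auto
  moreover have "balanced_leaves (insert_leaf G k v) = insert v (balanced_leaves G - {anchor G k})"
    using balanced_leaves_insert_leaf[OF assms(4,2,3)] .
  moreover have "balanced_leaves (insert_leaf H k v) = insert v (balanced_leaves H - {anchor H k})"
    using balanced_leaves_insert_leaf[OF assms(5)] assms(2,3) l by simp
  ultimately show ?thesis using assms(6) by blast
qed

lemma balanced_leaves_insert_leaf_Int_disjoint:
  assumes "set H \<inter> V = {}" "v \<in> V" "H \<noteq> []" "k \<le> length H + 1"
  shows "balanced_leaves (insert_leaf H k v) \<inter> V = {v}"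
proof -
  have "v \<notin> set H" using assms(1,2) by auto
  then have "v \<in> balanced_leaves (insert_leaf H k v)"
    using is_balanced_leaf_insert_leaf_new[OF _ assms(3,4)] unfolding balanced_leaves_def by simp
  moreover have "balanced_leaves (insert_leaf H k v) \<subseteq> insert v (set H)"
    using balanced_leaves_insert_leaf_subset[OF assms(3), of k v]
    by (auto simp flip: count_list_0_iff)
  ultimately show ?thesis using assms(1,2) by auto
qed

lemma balanced_leaves_insert_leaf_pair:
  assumes "w \<in> balanced_leaves (insert_leaf [a, b] k v)" "w \<noteq> v"
  shows "a \<noteq> b \<and> (w = a \<or> w = b)"
  using balanced_leaves_insert_leaf_subset[of "[a, b]" k v] assms by (auto split: if_splits)

definition leaves_match_on :: "nat set \<Rightarrow> nat list \<Rightarrow> nat list \<Rightarrow> bool" where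
  "leaves_match_on V G H \<longleftrightarrow> balanced_leaves H \<inter> V = balanced_leaves G \<inter> V \<and>
     (\<forall>w \<in> balanced_leaves H - V. \<forall>x \<in> V. x < w)"

lemma Min_balanced_leaves_eq:
  assumes "leaves_match_on V G H" "balanced_leaves G \<noteq> {}" "Min (balanced_leaves G) \<in> V"
  shows "balanced_leaves H \<noteq> {}" "Min (balanced_leaves H) = Min (balanced_leaves G)"
proof -
  let ?v = "Min (balanced_leaves G)"
  have eq: "balanced_leaves H \<inter> V = balanced_leaves G \<inter> V"
    and above: "\<forall>w \<in> balanced_leaves H - V. \<forall>x \<in> V. x < w"
    using assms(1) unfolding leaves_match_on_def by simp_all
  have "?v \<in> balanced_leaves G" using Min_in[OF balanced_leaves_finite assms(2)] .
  then have v: "?v \<in> balanced_leaves H" using eq assms(3) by (metis IntD1 IntI)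
  then show "balanced_leaves H \<noteq> {}" by auto
  show "Min (balanced_leaves H) = ?v"
  proof (rule Min_eqI[OF balanced_leaves_finite _ v])
    fix w assume w: "w \<in> balanced_leaves H"
    show "?v \<le> w"
    proof (cases "w \<in> V")
      case True
      then have "w \<in> balanced_leaves G" using w eq by (metis IntD1 IntI)
      then show ?thesis by (rule Min_le[OF balanced_leaves_finite])
    next
      case False
      then show ?thesis using w above assms(3) by (simp add: less_imp_le)
    qed
  qed
qed

function reseed :: "nat list \<Rightarrow> nat list \<Rightarrow> nat list" where
  "reseed c G = (if balanced_leaves G = {} then c
     else let v = Min (balanced_leaves G)
          in insert_leaf (reseed c (remove_leaf G v)) (first_pos G v) v)"
  by auto
termination
proof (relation "measure (\<lambda>(c, G). length G)")
  fix c G v assume "balanced_leaves G \<noteq> {}"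
  then have "length G > 2" unfolding balanced_leaves_def is_balanced_leaf_def by auto
  then show "((c, remove_leaf G v), c, G) \<in> measure (\<lambda>(c, G). length G)"
    using remove_leaf_length by simp
qed simp

declare reseed.simps [simp del]

lemma reseed_no_leaves: "balanced_leaves G = {} \<Longrightarrow> reseed c G = c"
  by (simp add: reseed.simps)

lemma reseed_remove_Min_leaf:
  "balanced_leaves G \<noteq> {} \<Longrightarrow>
    reseed c G = insert_leaf (reseed c (remove_leaf G (Min (balanced_leaves G))))
      (first_pos G (Min (balanced_leaves G))) (Min (balanced_leaves G))"
  by (simp add: reseed.simps Let_def)

definition seed_class :: "nat list \<Rightarrow> nat set \<Rightarrow> nat \<Rightarrow> nat set \<Rightarrow> nat list set" where
  "seed_class g0 V N B = {G \<in> circuits (set g0 \<union> V) N. seed G = g0 \<and> black G \<inter> V = B}"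

locale reseeding =
  fixes g0 c :: "nat list" and V :: "nat set"
  assumes length_eq: "length c = length g0" and length_ge: "length g0 \<ge> 2"
    and no_leaves_g0: "balanced_leaves g0 = {}" and no_leaves_c: "balanced_leaves c = {}"
    and disjoint_g0: "set g0 \<inter> V = {}" and disjoint_c: "set c \<inter> V = {}"
    and pair_above_g0: "\<And>a b x. g0 = [a, b] \<Longrightarrow> a \<noteq> b \<Longrightarrow> x \<in> V \<Longrightarrow> x < a \<and> x < b"
    and pair_above_c: "\<And>a b x. c = [a, b] \<Longrightarrow> a \<noteq> b \<Longrightarrow> x \<in> V \<Longrightarrow> x < a \<and> x < b"
begin

lemma remove_Min_leaf:
  assumes "seed G = g0" "set G \<subseteq> set g0 \<union> V" "balanced_leaves G \<noteq> {}"
  defines "v \<equiv> Min (balanced_leaves G)"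
  shows "v \<in> V" "v \<notin> set (remove_leaf G v)" "seed (remove_leaf G v) = g0"
    "set (remove_leaf G v) \<subseteq> set g0 \<union> V" "length (remove_leaf G v) \<ge> 2"
    "first_pos G v \<le> length (remove_leaf G v) + 1"
    "G = insert_leaf (remove_leaf G v) (first_pos G v) v"
proof -
  have leaf: "is_balanced_leaf G v" unfolding v_def by (rule is_balanced_leaf_Min[OF assms(3)])
  show "v \<notin> set (remove_leaf G v)" by (rule set_remove_leaf(2)[OF leaf])
  show seed: "seed (remove_leaf G v) = g0"
    using seed_remove_Min_leaf[OF assms(3)] assms(1) v_def by simp
  show "set (remove_leaf G v) \<subseteq> set g0 \<union> V" using set_remove_leaf(1)[OF leaf] assms(2) by auto
  have "set g0 \<subseteq> set (remove_leaf G v)" "length g0 \<le> length (remove_leaf G v)"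
    using seed_subset[of "remove_leaf G v"] seed by auto
  then show "v \<in> V" "length (remove_leaf G v) \<ge> 2"
    using set_remove_leaf[OF leaf] assms(2) length_ge by auto
  show "first_pos G v \<le> length (remove_leaf G v) + 1"
    by (rule first_pos_le_length_remove_leaf[OF leaf])
  show "G = insert_leaf (remove_leaf G v) (first_pos G v) v"
    by (rule insert_leaf_remove_leaf[OF leaf, symmetric])
qed

lemma leaves_match_on_insert_leaf:
  assumes "list_all2 (agree_on V) G' H" "leaves_match_on V G' H" "H = reseed c G'" "seed G' = g0"
    and "v \<in> V" "v \<notin> set G'" "v \<notin> set H" "k \<le> length G' + 1"
  shows "leaves_match_on V (insert_leaf G' k v) (insert_leaf H k v)"
proof -
  have lH: "length H = length G'" using assms(1) by (simp add: list_all2_lengthD)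
  have "length G' \<ge> 2" using seed_subset[of G'] assms(4) length_ge by auto
  show ?thesis
  proof (cases "length G' \<ge> 3")
    case True
    have "balanced_leaves (insert_leaf H k v) \<inter> V = balanced_leaves (insert_leaf G' k v) \<inter> V"
      using balanced_leaves_insert_leaf_agree_on[OF assms(1) True assms(8,6,7)] assms(2)
      unfolding leaves_match_on_def by blast
    moreover have "balanced_leaves (insert_leaf H k v) - V \<subseteq> balanced_leaves H - V"
      using balanced_leaves_insert_leaf[OF assms(7)] True lH assms(5,8) by auto
    ultimately show ?thesis using assms(2) unfolding leaves_match_on_def by blast
  next
    case False
    then have "length G' = 2" using \<open>length G' \<ge> 2\<close> by simp
    then have "G' = g0" "H = c"
      using no_balanced_leaves_short seed_no_leaves reseed_no_leaves assms(3,4) by auto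
    then obtain a b where ab: "c = [a, b]" using length_eq \<open>length G' = 2\<close>
      by (metis One_nat_def Suc_1 length_0_conv length_Suc_conv)
    have "g0 \<noteq> []" "k \<le> length g0 + 1" using \<open>length G' = 2\<close> \<open>G' = g0\<close> assms(8) by auto
    then have "balanced_leaves (insert_leaf G' k v) \<inter> V = {v}"
      using balanced_leaves_insert_leaf_Int_disjoint[OF disjoint_g0 assms(5)] \<open>G' = g0\<close> by simp
    moreover have "balanced_leaves (insert_leaf H k v) \<inter> V = {v}"
      using balanced_leaves_insert_leaf_Int_disjoint[OF disjoint_c assms(5)] assms(8) \<open>H = c\<close> ab lH
      by simp
    moreover have "x < w" if "w \<in> balanced_leaves (insert_leaf H k v) - V" "x \<in> V" for w x
      using balanced_leaves_insert_leaf_pair[of w a b k v] pair_above_c[OF ab _ that(2)] that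
        \<open>H = c\<close> ab assms(5) by auto
    ultimately show ?thesis unfolding leaves_match_on_def by auto
  qed
qed

lemma reseed_invariant:
  assumes "seed G = g0" "set G \<subseteq> set g0 \<union> V"
  shows "list_all2 (agree_on V) G (reseed c G) \<and> leaves_match_on V G (reseed c G) \<and>
    set (reseed c G) = set c \<union> (set G \<inter> V)"
  using assms
proof (induction G rule: seed.induct)
  case (1 G)
  show ?case
  proof (cases "balanced_leaves G = {}")
    case True
    then have G: "G = g0" and R: "reseed c G = c"
      using "1.prems"(1) seed_no_leaves reseed_no_leaves by auto
    have "list_all2 (agree_on V) g0 c"
    proof (rule list_all2_all_nthI)
      show "length g0 = length c" using length_eq by simp
      fix i assume "i < length g0"
      then have "g0 ! i \<in> set g0" "c ! i \<in> set c" using length_eq by auto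
      then show "agree_on V (g0 ! i) (c ! i)"
        using disjoint_g0 disjoint_c unfolding agree_on_def by auto
    qed
    then show ?thesis
      using G R no_leaves_g0 no_leaves_c disjoint_g0 unfolding leaves_match_on_def by auto
  next
    case False
    define v where "v = Min (balanced_leaves G)"
    define G' where "G' = remove_leaf G v"
    define k where "k = first_pos G v"
    define H where "H = reseed c G'"
    note step = remove_Min_leaf[OF "1.prems" False, folded v_def, folded G'_def k_def]
    have IH: "list_all2 (agree_on V) G' H \<and> leaves_match_on V G' H \<and> set H = set c \<union> (set G' \<inter> V)"
      using "1.IH"[OF False] step(3,4) unfolding H_def G'_def v_def by blast
    have "G' \<noteq> []" "H \<noteq> []" using step(5) IH list_all2_lengthD by fastforce+
    have "v \<notin> set H" using IH step(1,2) disjoint_c by auto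
    have R: "reseed c G = insert_leaf H k v"
      using reseed_remove_Min_leaf[OF False] unfolding H_def G'_def k_def v_def by simp
    have "list_all2 (agree_on V) G (reseed c G)"
      using list_all2_insert_leaf[of "agree_on V" G' H v k] IH step(7) R \<open>G' \<noteq> []\<close>
      by (simp add: agree_on_def)
    moreover have "leaves_match_on V G (reseed c G)"
      using leaves_match_on_insert_leaf[OF _ _ H_def step(3,1,2) \<open>v \<notin> set H\<close> step(6)] IH step(7) R
      by simp
    moreover have "set (reseed c G) = set c \<union> (set G \<inter> V)"
      using set_insert_leaf[OF \<open>H \<noteq> []\<close>] set_insert_leaf[OF \<open>G' \<noteq> []\<close>] IH step(1,7) R by auto
    ultimately show ?thesis by blast
  qed
qed

lemma reseed_Min_leaf:
  assumes "seed G = g0" "set G \<subseteq> set g0 \<union> V" "balanced_leaves G \<noteq> {}"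
  defines "v \<equiv> Min (balanced_leaves G)"
  shows "balanced_leaves (reseed c G) \<noteq> {}" "Min (balanced_leaves (reseed c G)) = v"
    "remove_leaf (reseed c G) v = reseed c (remove_leaf G v)"
    "first_pos (reseed c G) v = first_pos G v"
proof -
  note step = remove_Min_leaf[OF assms(1-3), folded v_def]
  have "leaves_match_on V G (reseed c G)" using reseed_invariant[OF assms(1,2)] by blast
  from Min_balanced_leaves_eq[OF this assms(3)] step(1)
  show "balanced_leaves (reseed c G) \<noteq> {}" "Min (balanced_leaves (reseed c G)) = v"
    unfolding v_def by simp_all
  let ?H = "reseed c (remove_leaf G v)"
  have inv: "list_all2 (agree_on V) (remove_leaf G v) ?H \<and>
      set ?H = set c \<union> (set (remove_leaf G v) \<inter> V)"
    using reseed_invariant[OF step(3,4)] by blast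
  then have "length ?H = length (remove_leaf G v)" by (metis list_all2_lengthD)
  then have H: "?H \<noteq> []" "first_pos G v \<le> length ?H + 1" using step(5,6) by auto
  have "v \<notin> set ?H" using inv step(1,2) disjoint_c by auto
  moreover have "reseed c G = insert_leaf ?H (first_pos G v) v"
    using reseed_remove_Min_leaf[OF assms(3)] unfolding v_def by simp
  ultimately show "remove_leaf (reseed c G) v = ?H" "first_pos (reseed c G) v = first_pos G v"
    using remove_leaf_insert_leaf[OF _ H] first_pos_insert_leaf[OF _ H] by simp_all
qed

lemma seed_reseed:
  "seed G = g0 \<Longrightarrow> set G \<subseteq> set g0 \<union> V \<Longrightarrow> seed (reseed c G) = c"
proof (induction G rule: seed.induct)
  case (1 G)
  show ?case
  proof (cases "balanced_leaves G = {}")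
    case False
    note step = remove_Min_leaf[OF "1.prems" False]
      and reseed_step = reseed_Min_leaf[OF "1.prems" False]
    have "seed (reseed c G) = seed (reseed c (remove_leaf G (Min (balanced_leaves G))))"
      using seed_remove_Min_leaf[OF reseed_step(1)] reseed_step(2,3) by simp
    then show ?thesis using "1.IH"[OF False step(3,4)] by simp
  qed (simp add: reseed_no_leaves seed_no_leaves no_leaves_c)
qed

lemma reseed_reseed:
  "seed G = g0 \<Longrightarrow> set G \<subseteq> set g0 \<union> V \<Longrightarrow> reseed g0 (reseed c G) = G"
proof (induction G rule: seed.induct)
  case (1 G)
  show ?case
  proof (cases "balanced_leaves G = {}")
    case True
    then show ?thesis using "1.prems"(1) by (simp add: reseed_no_leaves seed_no_leaves no_leaves_c)
  next
    case False
    note step = remove_Min_leaf[OF "1.prems" False]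
      and reseed_step = reseed_Min_leaf[OF "1.prems" False]
    have "reseed g0 (reseed c G) =
        insert_leaf (reseed g0 (reseed c (remove_leaf G (Min (balanced_leaves G)))))
          (first_pos G (Min (balanced_leaves G))) (Min (balanced_leaves G))"
      using reseed_remove_Min_leaf[OF reseed_step(1)] reseed_step(2-4) by simp
    then show ?thesis using "1.IH"[OF False step(3,4)] step(7) by simp
  qed
qed

lemma reseed_seed_class:
  assumes "G \<in> seed_class g0 V N B"
  shows "reseed c G \<in> seed_class c V N B"
proof -
  have G: "set G = set g0 \<union> V" "length G = N" "seed G = g0" "black G \<inter> V = B"
    using assms unfolding seed_class_def circuits_def by auto
  then have agree: "list_all2 (agree_on V) G (reseed c G)"
    and set: "set (reseed c G) = set c \<union> (set G \<inter> V)"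
    using reseed_invariant[of G] by auto
  have "length (reseed c G) = N" using agree G(2) by (metis list_all2_lengthD)
  moreover have "set (reseed c G) = set c \<union> V" using set G(1) by auto
  moreover have "black (reseed c G) \<inter> V = B" using black_Int_eq_if_agree_on[OF agree] G(4) by simp
  moreover have "seed (reseed c G) = c" using seed_reseed G(1,3) by simp
  ultimately show ?thesis unfolding seed_class_def circuits_def by simp
qed

lemma bij_betw_reseed: "bij_betw (reseed c) (seed_class g0 V N B) (seed_class c V N B)"
proof -
  interpret swapped: reseeding c g0 V
    using length_eq length_ge no_leaves_g0 no_leaves_c disjoint_g0 disjoint_c
      pair_above_g0 pair_above_c
    by unfold_locales simp_all
  show ?thesis
  proof (rule bij_betw_byWitness[where f' = "reseed g0"])
    show "\<forall>G \<in> seed_class g0 V N B. reseed g0 (reseed c G) = G"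
      using reseed_reseed unfolding seed_class_def circuits_def by auto
    show "\<forall>G \<in> seed_class c V N B. reseed c (reseed g0 G) = G"
      using swapped.reseed_reseed unfolding seed_class_def circuits_def by auto
    show "reseed c ` seed_class g0 V N B \<subseteq> seed_class c V N B"
      using reseed_seed_class by blast
    show "reseed g0 ` seed_class c V N B \<subseteq> seed_class g0 V N B"
      using swapped.reseed_seed_class by blast
  qed
qed

end

theorem lemma5p1:
  fixes V0 V0' V' :: "nat set" and l0 :: nat and G0 G0' :: "nat list" and B :: "nat set"
  assumes "finite V0" "finite V0'" "finite V'"
    and "0 \<notin> V0" "0 \<notin> V0'" "0 \<notin> V'"
    and "l0 \<ge> 1"
    and "G0 \<in> circuits V0 (2 * l0)" "G0' \<in> circuits V0' (2 * l0)"
    and "balanced_leaves G0 = {}" "balanced_leaves G0' = {}"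
    and "V' \<inter> V0 = {}" "V' \<inter> V0' = {}"
    and "l0 = 1 \<longrightarrow> (\<forall>a b. G0 = [a, b] \<and> a \<noteq> b \<longrightarrow> (\<forall>x\<in>V'. x < a \<and> x < b))"
    and "l0 = 1 \<longrightarrow> (\<forall>a b. G0' = [a, b] \<and> a \<noteq> b \<longrightarrow> (\<forall>x\<in>V'. x < a \<and> x < b))"
    and "B \<subseteq> V'"
  shows "card {G \<in> circuits (V0 \<union> V') (2 * l0 + 2 * card V'). seed G = G0 \<and> black G \<inter> V' = B}
       = card {G \<in> circuits (V0' \<union> V') (2 * l0 + 2 * card V'). seed G = G0' \<and> black G \<inter> V' = B}"
proof -
  have G0: "set G0 = V0" "length G0 = 2 * l0" and G0': "set G0' = V0'" "length G0' = 2 * l0"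
    using assms(8,9) unfolding circuits_def by auto
  interpret reseeding G0 G0' V'
    by unfold_locales (use assms G0 G0' in auto)
  have "bij_betw (reseed G0') (seed_class G0 V' (2 * l0 + 2 * card V') B)
      (seed_class G0' V' (2 * l0 + 2 * card V') B)"
    by (rule bij_betw_reseed)
  then show ?thesis using bij_betw_same_card G0(1) G0'(1) unfolding seed_class_def by blast
qed

end
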